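(* Let $m\ge2$ be even, $n\ge2$, and let $g,h\in\mathbb{R}$ with $h\neq0$ and $g/h\notin\mathbb{Z}$. Let $\mathcal{A}$ be the Cauchy-Hankel tensor of order $m$ and dimension $n$ with entries $a_{i_1\cdots i_m}=\frac{1}{g+h(i_1+\cdots+i_m)}$, $i_j\in\{1,\dots,n\}$. Then $\mathcal{A}$ is positive definite if and only if $g+mh>0$ and $g+nmh>0$.
   Context: A tensor $\mathcal{A}$ of even order $m$ is positive definite if $\mathcal{A}x^m=\sum_{i_1,\dots,i_m}a_{i_1\cdots i_m}x_{i_1}\cdots x_{i_m}>0$ for all nonzero $x\in\mathbb{R}^n$. *)

theory Defs
  imports Complex_Main "HOL-Library.FuncSet"
begin

text \<open>A real tensor of order m and dimension n is a function from index tuples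
  (i_1,...,i_m) with i_j in {1..n}, represented as maps from {0..<m} to {1..n}
  (extensional, via PiE), to reals. Vectors x in R^n are functions nat => real
  whose relevant coordinates are x 1, ..., x n.\<close>

definition tensor_form :: "nat \<Rightarrow> nat \<Rightarrow> ((nat \<Rightarrow> nat) \<Rightarrow> real) \<Rightarrow> (nat \<Rightarrow> real) \<Rightarrow> real" where
  "tensor_form m n A x =
     (\<Sum>\<iota>\<in>PiE {0..<m} (\<lambda>_. {1..n}). A \<iota> * (\<Prod>j<m. x (\<iota> j)))"

definition positive_definite_tensor :: "nat \<Rightarrow> nat \<Rightarrow> ((nat \<Rightarrow> nat) \<Rightarrow> real) \<Rightarrow> bool" where
  "positive_definite_tensor m n A \<longleftrightarrow>
     (\<forall>x :: nat \<Rightarrow> real. (\<exists>i\<in>{1..n}. x i \<noteq> 0) \<longrightarrow> tensor_form m n A x > 0)"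

definition cauchy_hankel :: "nat \<Rightarrow> real \<Rightarrow> real \<Rightarrow> (nat \<Rightarrow> nat) \<Rightarrow> real" where
  "cauchy_hankel m g h = (\<lambda>\<iota>. 1 / (g + h * real (\<Sum>j<m. \<iota> j)))"

end

theory Submission imports Defs "HOL-Computational_Algebra.Polynomial" begin

text \<open>Since \<open>1/c = \<integral>\<^sub>0\<^sup>\<infinity> e\<^sup>-\<^sup>c\<^sup>t dt\<close> for \<open>c > 0\<close>, the form \<open>\<A>x\<^sup>m\<close> equals
  \<open>\<integral>\<^sub>0\<^sup>\<infinity> e\<^sup>-\<^sup>g\<^sup>t (\<Sum>\<^sub>i x\<^sub>i e\<^sup>-\<^sup>h\<^sup>i\<^sup>t)\<^sup>m dt\<close> once all denominators are positive, which is
  the case exactly when \<open>g + mh\<close> and \<open>g + nmh\<close> (the extreme ones) are. For even \<open>m\<close> the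
  integrand is nonnegative, and it cannot vanish identically, because
  \<open>\<Sum>\<^sub>i x\<^sub>i e\<^sup>-\<^sup>h\<^sup>i\<^sup>t\<close> is a nonzero polynomial in \<open>e\<^sup>-\<^sup>h\<^sup>t\<close>. Conversely, the unit vectors
  \<open>e\<^sub>1\<close> and \<open>e\<^sub>n\<close> pick out the diagonal entries \<open>1/(g + mh)\<close> and \<open>1/(g + nmh)\<close>.
  The integral is avoided by working with an explicit primitive of the integrand.\<close>

lemma sum_PiE_prod_eq_power:
  fixes f :: "nat \<Rightarrow> 'a :: comm_semiring_1"
  assumes "finite A"
  shows "(\<Sum>\<iota>\<in>PiE {0..<m} (\<lambda>_. A). \<Prod>j<m. f (\<iota> j)) = (\<Sum>i\<in>A. f i) ^ m"
proof -
  have "(\<Prod>j\<in>{0..<m}. \<Sum>i\<in>A. f i) = (\<Sum>\<iota>\<in>PiE {0..<m} (\<lambda>_. A). \<Prod>j\<in>{0..<m}. f (\<iota> j))"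
    using assms by (intro prod_sum_PiE) auto
  then show ?thesis by (simp add: lessThan_atLeast0)
qed

lemma tensor_form_unit_vector:
  assumes "c \<in> {1..n}" and "0 < m"
  shows "tensor_form m n A (\<lambda>k. if k = c then 1 else 0) = A (\<lambda>j\<in>{0..<m}. c)"
proof -
  let ?I = "PiE {0..<m} (\<lambda>_. {1..n})"
  let ?diag = "\<lambda>j\<in>{0..<m}. c"
  let ?e = "\<lambda>k. if k = c then 1 else 0 :: real"
  have "(\<Prod>j<m. ?e (\<iota> j)) = 0" if "\<iota> \<in> ?I - {?diag}" for \<iota>
  proof -
    from that have "\<iota> \<noteq> ?diag" "\<iota> \<in> extensional {0..<m}" by (auto simp: PiE_def)
    then obtain j where "j < m" "\<iota> j \<noteq> c"
      by (metis atLeastLessThan_iff extensionalityI restrict_apply' restrict_extensional zero_le)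
    then show ?thesis by (auto intro!: prod_zero)
  qed
  then have "(\<Sum>\<iota>\<in>?I - {?diag}. A \<iota> * (\<Prod>j<m. ?e (\<iota> j))) = 0"
    by (intro sum.neutral) simp
  moreover have "?diag \<in> ?I" using assms(1) by auto
  ultimately have "tensor_form m n A ?e = A ?diag * (\<Prod>j<m. ?e (?diag j))"
    unfolding tensor_form_def by (simp add: sum.remove[of _ ?diag] finite_PiE)
  then show ?thesis by simp
qed

lemma exp_sum_primitive_has_derivative:
  fixes y c :: "'a \<Rightarrow> real"
  assumes "\<And>i. i \<in> I \<Longrightarrow> c i \<noteq> 0"
  shows "((\<lambda>T. \<Sum>i\<in>I. y i * ((1 - exp (-(c i * T))) / c i))
           has_real_derivative (\<Sum>i\<in>I. y i * exp (-(c i * T)))) (at T)"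
proof (rule DERIV_sum)
  fix i assume "i \<in> I"
  have "((\<lambda>T. y i * ((1 - exp (-(c i * T))) / c i))
          has_real_derivative y i * ((0 - exp (-(c i * T)) * (-(c i))) / c i)) (at T)"
    by (intro DERIV_cmult DERIV_cdivide DERIV_diff DERIV_const DERIV_fun_exp DERIV_minus
        DERIV_cmult_right DERIV_ident) simp
  then show "((\<lambda>T. y i * ((1 - exp (-(c i * T))) / c i))
               has_real_derivative y i * exp (-(c i * T))) (at T)"
    using assms[OF \<open>i \<in> I\<close>] by simp
qed

lemma tendsto_exp_neg_mult_at_top:
  fixes c :: real
  assumes "c > 0"
  shows "((\<lambda>T. exp (-(c * T))) \<longlongrightarrow> 0) at_top"
proof -
  have "filterlim (\<lambda>T. c * T) at_top at_top"
    by (rule filterlim_tendsto_pos_mult_at_top[OF tendsto_const assms filterlim_ident])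
  then have "filterlim (\<lambda>T. -(c * T)) at_bot at_top"
    by (simp add: filterlim_uminus_at_top)
  then show ?thesis by (rule filterlim_compose[OF exp_at_bot])
qed

lemma exp_sum_primitive_tendsto:
  fixes y c :: "'a \<Rightarrow> real"
  assumes "\<And>i. i \<in> I \<Longrightarrow> c i > 0"
  shows "((\<lambda>T. \<Sum>i\<in>I. y i * ((1 - exp (-(c i * T))) / c i)) \<longlongrightarrow> (\<Sum>i\<in>I. y i / c i)) at_top"
proof -
  have "c i \<noteq> 0" if "i \<in> I" for i
    using assms[OF that] by simp
  then have "((\<lambda>T. \<Sum>i\<in>I. y i * ((1 - exp (-(c i * T))) / c i)) \<longlongrightarrow> (\<Sum>i\<in>I. y i * ((1 - 0) / c i))) at_top"
    using assms by (intro tendsto_intros tendsto_exp_neg_mult_at_top)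
  then show ?thesis by simp
qed

text \<open>The discrete form of \<open>\<integral>\<^sub>0\<^sup>\<infinity> f > 0\<close> for a continuous \<open>f \<ge> 0\<close> with \<open>f(t) \<noteq> 0\<close>.\<close>

lemma sum_div_pos_if_exp_sum_nonneg:
  fixes y c :: "'a \<Rightarrow> real"
  assumes c_pos: "\<And>i. i \<in> I \<Longrightarrow> c i > 0"
    and nonneg: "\<And>T. 0 \<le> (\<Sum>i\<in>I. y i * exp (-(c i * T)))"
    and "0 < t" and nonzero: "(\<Sum>i\<in>I. y i * exp (-(c i * t))) \<noteq> 0"
  shows "(\<Sum>i\<in>I. y i / c i) > 0"
proof (rule ccontr)
  define G where "G T = (\<Sum>i\<in>I. y i * ((1 - exp (-(c i * T))) / c i))" for T
  define F where "F = (\<Sum>i\<in>I. y i / c i)"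
  assume "\<not> (\<Sum>i\<in>I. y i / c i) > 0"
  then have "F \<le> 0" by (simp add: F_def)
  have G': "(G has_real_derivative (\<Sum>i\<in>I. y i * exp (-(c i * T)))) (at T)" for T
    unfolding G_def by (rule exp_sum_primitive_has_derivative) (use c_pos in fastforce)
  have mono: "G a \<le> G b" if "a \<le> b" for a b
    using G' nonneg by (intro DERIV_nonneg_imp_nondecreasing[OF that]) blast
  have "G T \<le> F" for T
  proof (rule tendsto_le[OF _ _ tendsto_const])
    show "(G \<longlongrightarrow> F) at_top"
      unfolding G_def F_def using c_pos by (rule exp_sum_primitive_tendsto)
    show "\<forall>\<^sub>F T' in at_top. G T \<le> G T'"
      using eventually_ge_at_top[of T] by eventually_elim (rule mono)
  qed simp
  moreover have "G 0 = 0" by (simp add: G_def)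
  ultimately have "G T = 0" if "0 \<le> T" for T
    using mono[OF that] \<open>F \<le> 0\<close> by (metis antisym order_trans)
  then have "(\<Sum>i\<in>I. y i * exp (-(c i * t))) = 0"
    using \<open>0 < t\<close> by (intro DERIV_local_const[OF G', of t t]) (auto simp: abs_less_iff)
  with nonzero show False ..
qed

lemma exp_poly_nonzero_in_interval:
  fixes x :: "nat \<Rightarrow> real" and a b h :: real
  assumes "finite S" and "k \<in> S" and "x k \<noteq> 0" and "h \<noteq> 0" and "a < b"
  shows "\<exists>t\<in>{a<..<b}. (\<Sum>i\<in>S. x i * exp (-(h * real i * t))) \<noteq> 0"
proof (rule ccontr)
  assume "\<not> ?thesis"
  then have vanish: "(\<Sum>i\<in>S. x i * exp (-(h * real i * t))) = 0" if "t \<in> {a<..<b}" for t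
    using that by blast
  define q :: "real poly" where "q = (\<Sum>i\<in>S. monom (x i) i)"
  have q_eval: "poly q (exp (-(h * t))) = (\<Sum>i\<in>S. x i * exp (-(h * real i * t)))" for t
  proof -
    have "exp (-(h * real i * t)) = exp (-(h * t)) ^ i" for i
      using exp_of_nat_mult[of i "-(h * t)"] by (simp add: algebra_simps)
    then show ?thesis unfolding q_def by (simp add: poly_sum poly_monom)
  qed
  have "coeff q k = x k" unfolding q_def using assms(1,2) by (simp add: coeff_sum)
  with assms(3) have "q \<noteq> 0" by auto
  then have "finite {z. poly q z = 0}" by (rule poly_roots_finite)
  moreover have "(\<lambda>t. exp (-(h * t))) ` {a<..<b} \<subseteq> {z. poly q z = 0}"
    using vanish q_eval by auto
  ultimately have "finite ((\<lambda>t. exp (-(h * t))) ` {a<..<b})" by (rule finite_subset[rotated])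
  moreover have "inj_on (\<lambda>t. exp (-(h * t))) {a<..<b}"
    using assms(4) by (auto simp: inj_on_def)
  ultimately have "finite {a<..<b}" by (rule finite_imageD)
  with infinite_Ioo[OF assms(5)] show False by simp
qed

lemma cauchy_hankel_exp_sum_factor:
  fixes x :: "nat \<Rightarrow> real"
  shows "(\<Sum>\<iota>\<in>PiE {0..<m} (\<lambda>_. {1..n}).
            (\<Prod>j<m. x (\<iota> j)) * exp (-((g + h * real (\<Sum>j<m. \<iota> j)) * T)))
       = exp (-(g * T)) * (\<Sum>i=1..n. x i * exp (-(h * real i * T))) ^ m"
proof -
  have "(\<Prod>j<m. x (\<iota> j)) * exp (-((g + h * real (\<Sum>j<m. \<iota> j)) * T))
        = exp (-(g * T)) * (\<Prod>j<m. x (\<iota> j) * exp (-(h * real (\<iota> j) * T)))" for \<iota> :: "nat \<Rightarrow> nat"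
  proof -
    have "-((g + h * real (\<Sum>j<m. \<iota> j)) * T) = -(g * T) + (\<Sum>j<m. -(h * real (\<iota> j) * T))"
      by (simp add: algebra_simps sum_distrib_left sum_distrib_right sum_negf)
    then have "exp (-((g + h * real (\<Sum>j<m. \<iota> j)) * T))
               = exp (-(g * T)) * (\<Prod>j<m. exp (-(h * real (\<iota> j) * T)))"
      by (simp only: exp_add exp_sum[OF finite_lessThan])
    then show ?thesis by (simp add: prod.distrib)
  qed
  then show ?thesis
    by (simp add: sum_distrib_left flip: sum_PiE_prod_eq_power)
qed

lemma affine_pos_between:
  fixes g h s a b :: real
  assumes "a \<le> s" and "s \<le> b" and "g + h * a > 0" and "g + h * b > 0"
  shows "g + h * s > 0"
proof (cases "h \<ge> 0")
  case True
  then have "h * a \<le> h * s" using assms(1) by (intro mult_left_mono)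
  with assms(3) show ?thesis by linarith
next
  case False
  then have "h * b \<le> h * s" using assms(2) by (intro mult_left_mono_neg) auto
  with assms(4) show ?thesis by linarith
qed

lemma cauchy_hankel_denominator_pos:
  fixes g h :: real
  assumes "\<iota> \<in> PiE {0..<m} (\<lambda>_. {1..n})"
    and "g + real m * h > 0" and "g + real n * real m * h > 0"
  shows "g + h * real (\<Sum>j<m. \<iota> j) > 0"
proof (rule affine_pos_between)
  have "m * 1 \<le> (\<Sum>j<m. \<iota> j)" "(\<Sum>j<m. \<iota> j) \<le> m * n"
    using sum_mono[of "{..<m}" "\<lambda>_. 1" \<iota>] sum_mono[of "{..<m}" \<iota> "\<lambda>_. n"] assms(1)
    by (auto simp: PiE_def Pi_def)
  then show "real m \<le> real (\<Sum>j<m. \<iota> j)" "real (\<Sum>j<m. \<iota> j) \<le> real m * real n"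
    by (metis mult_1_right of_nat_le_iff, metis of_nat_mult of_nat_le_iff)
qed (use assms(2,3) in \<open>simp_all add: algebra_simps\<close>)

lemma positive_definite_cauchy_hankel_diagonal:
  assumes "positive_definite_tensor m n (cauchy_hankel m g h)"
    and "0 < m" and "c \<in> {1..n}"
  shows "g + real m * real c * h > 0"
proof -
  have "0 < tensor_form m n (cauchy_hankel m g h) (\<lambda>k. if k = c then 1 else 0)"
    using assms(1,3) unfolding positive_definite_tensor_def by auto
  also have "\<dots> = 1 / (g + h * (real m * real c))"
    using tensor_form_unit_vector[OF assms(3,2)] by (simp add: cauchy_hankel_def)
  finally show ?thesis by (simp add: zero_less_divide_1_iff algebra_simps)
qed

lemma cauchy_hankel_positive_definite:
  fixes g h :: real
  assumes "even m" and "0 < m" and "h \<noteq> 0"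
    and "g + real m * h > 0" and "g + real n * real m * h > 0"
  shows "positive_definite_tensor m n (cauchy_hankel m g h)"
  unfolding positive_definite_tensor_def
proof (intro allI impI)
  fix x :: "nat \<Rightarrow> real"
  assume "\<exists>i\<in>{1..n}. x i \<noteq> 0"
  then obtain k where "k \<in> {1..n}" "x k \<noteq> 0" by blast
  then obtain t where t: "t \<in> {0<..<1}" "(\<Sum>i=1..n. x i * exp (-(h * real i * t))) \<noteq> 0"
    using exp_poly_nonzero_in_interval[of "{1..n}" k x h 0 1] assms(3) by auto
  let ?I = "PiE {0..<m} (\<lambda>_. {1..n})"
  define c where "c \<iota> = g + h * real (\<Sum>j<m. \<iota> j)" for \<iota> :: "nat \<Rightarrow> nat"
  define y where "y \<iota> = (\<Prod>j<m. x (\<iota> j))" for \<iota> :: "nat \<Rightarrow> nat"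
  have exp_sum: "(\<Sum>\<iota>\<in>?I. y \<iota> * exp (-(c \<iota> * T)))
                 = exp (-(g * T)) * (\<Sum>i=1..n. x i * exp (-(h * real i * T))) ^ m" for T
    unfolding c_def y_def by (rule cauchy_hankel_exp_sum_factor)
  have "(\<Sum>\<iota>\<in>?I. y \<iota> / c \<iota>) > 0"
  proof (rule sum_div_pos_if_exp_sum_nonneg)
    show "c \<iota> > 0" if "\<iota> \<in> ?I" for \<iota>
      unfolding c_def using that assms(4,5) by (rule cauchy_hankel_denominator_pos)
    show "0 \<le> (\<Sum>\<iota>\<in>?I. y \<iota> * exp (-(c \<iota> * T)))" for T
      unfolding exp_sum using assms(1) by (simp add: zero_le_even_power)
    show "(\<Sum>\<iota>\<in>?I. y \<iota> * exp (-(c \<iota> * t))) \<noteq> 0"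
      unfolding exp_sum using t(2) assms(2) by simp
  qed (use t(1) in simp)
  then show "tensor_form m n (cauchy_hankel m g h) x > 0"
    unfolding tensor_form_def cauchy_hankel_def c_def y_def by simp
qed

text \<open>The hypothesis \<open>g/h \<notin> \<int>\<close> only serves to make all entries of the tensor defined.\<close>

theorem theorem5p1:
  fixes m n :: nat and g h :: real
  assumes "even m" and "m \<ge> 2" and "n \<ge> 2"
    and "h \<noteq> 0" and "g / h \<notin> \<int>"
  shows "positive_definite_tensor m n (cauchy_hankel m g h) \<longleftrightarrow>
           (g + real m * h > 0 \<and> g + real n * real m * h > 0)"
proof
  assume "positive_definite_tensor m n (cauchy_hankel m g h)"
  with assms(2,3) show "g + real m * h > 0 \<and> g + real n * real m * h > 0"
    using positive_definite_cauchy_hankel_diagonal[of m n g h 1]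
          positive_definite_cauchy_hankel_diagonal[of m n g h n]
    by (simp add: mult.commute)
next
  assume "g + real m * h > 0 \<and> g + real n * real m * h > 0"
  with assms(1,2,4) show "positive_definite_tensor m n (cauchy_hankel m g h)"
    by (intro cauchy_hankel_positive_definite) auto
qed

end
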